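(* Consider the cone percolation process on $\mathbb{T}_d$ ($d\ge2$) with $R$ binomial: $\mathbb{P}(R=k)=\binom{n}{k}p^k(1-p)^{n-k}$, $k=0,1,\dots,n$, where $n\ge1$ and $p\in(0,1)$. If $(pd+1-p)^n-(1-p)^n>1$ then $\mathbb{P}[V]>0$; if $2d-d(pd+1-p)^n\ge 1$ then $\mathbb{P}[V]=0$.
   Context: Let $d\ge 2$ and let $\mathbb{T}_d$ be the infinite tree in which every vertex has exactly $d+1$ neighbours. Fix a vertex $\mathcal{O}$ (the origin); $d(u,v)$ denotes graph distance. Write $u\le v$ if $u$ lies on the path from $\mathcal{O}$ to $v$ (so $\mathcal{O}\le v$ for all $v$). Let $R$ be a random variable with values in $\{0,1,2,\dots\}$. Cone percolation on $\mathbb{T}_d$: to each vertex $u$ attach an independent copy $R_u$ of $R$; let $B_u=\{v: u\le v,\ d(u,v)\le R_u\}$; set $I_0=\{\mathcal{O}\}$, $I_{n+1}=\bigcup_{u\in I_n}B_u$, $I=\bigcup_{n\ge0}I_n$, and let $V=\{|I|=\infty\}$; $\mathbb{P}$ is the probability measure of this process. *)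

theory Defs
  imports "HOL-Probability.Probability"
begin

text \<open>Vertices of the (d+1)-regular tree T_d, rooted at the origin O = [].
  A vertex is the list of child indices along the path from O: the first
  index ranges over the d+1 neighbours of O, every later index over the
  d children of a non-root vertex. u \<le> v (u on the path from O to v) is
  the prefix relation, and then the graph distance d(u,v) = length v - length u.\<close>

definition tree_verts :: "nat \<Rightarrow> nat list set" where
  "tree_verts d = {xs. \<forall>i<length xs. xs ! i < (if i = 0 then d + 1 else d)}"

definition cone :: "nat \<Rightarrow> (nat list \<Rightarrow> nat) \<Rightarrow> nat list \<Rightarrow> nat list set" where
  "cone d r u = {v \<in> tree_verts d. prefix u v \<and> length v - length u \<le> r u}"

inductive_set cluster :: "nat \<Rightarrow> (nat list \<Rightarrow> nat) \<Rightarrow> nat list set"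
  for d :: nat and r :: "nat list \<Rightarrow> nat" where
  origin: "[] \<in> cluster d r"
| spread: "u \<in> cluster d r \<Longrightarrow> v \<in> cone d r u \<Longrightarrow> v \<in> cluster d r"

definition cone_space :: "nat \<Rightarrow> nat pmf \<Rightarrow> (nat list \<Rightarrow> nat) measure" where
  "cone_space d Rdist = PiM (tree_verts d) (\<lambda>_. measure_pmf Rdist)"

definition survival_event :: "nat \<Rightarrow> nat pmf \<Rightarrow> (nat list \<Rightarrow> nat) set" where
  "survival_event d Rdist = {\<omega> \<in> space (cone_space d Rdist). infinite (cluster d \<omega>)}"

end

theory Submission
  imports Defs
begin

text \<open>
  Survival (positive probability of an infinite cluster) is proved by a Galton--Watson
  comparison. Following only jumps from an infected vertex \<open>v\<close> with \<open>1 \<le> R\<^sub>v \<le> n\<close> to its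
  \<open>d\<^sup>R\<^sup>v\<close> descendants at distance exactly \<open>R\<^sub>v\<close> gives a branching process with mean offspring
  \<open>\<Sum>\<^sub>r\<^sub>\<ge>\<^sub>1 P(R = r) d\<^sup>r\<close>; when this mean exceeds 1, a positive point below its survival map
  bounds the probability of reaching every depth from below.

  Extinction is proved by bounding the probability of reaching depth \<open>k + 1\<close> by the
  probability of a "carried" path of length \<open>k\<close>, which tracks the residual reach inherited
  from ancestors. These probabilities obey a recursive upper bound; its limit is a fixed
  point, and a potential argument with \<open>y(m) = (d\<^sup>m - 1) / (d - 1)\<close> shows that under
  \<open>d \<Sum> P(R = r) d\<^sup>r \<le> 2d - 1\<close> this fixed point vanishes.

  The main theorem specialises them to binomial \<open>R\<close> via its
  generating function.
\<close>

subsection \<open>The product probability space\<close>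

lemma space_cone_space: "space (cone_space d q) = PiE (tree_verts d) (\<lambda>_. UNIV)"
  by (simp add: cone_space_def space_PiM)

lemma prob_space_cone_space: "prob_space (cone_space d q)"
  unfolding cone_space_def by (rule prob_space_PiM) (simp add: prob_space_measure_pmf)

text \<open>A product of finitely many copies of a discrete measure on \<open>nat\<close> is a countable
  discrete space: every subset of its space is measurable.\<close>
lemma sets_PiM_finite_discrete:
  assumes "finite K" and "A \<subseteq> space (PiM K (\<lambda>_. measure_pmf (q :: nat pmf)))"
  shows "A \<in> sets (PiM K (\<lambda>_. measure_pmf q))"
proof (rule sets.countable)
  fix a assume "a \<in> A"
  hence "a \<in> PiE K (\<lambda>_. UNIV)" using assms(2) by (auto simp: space_PiM)
  hence "{a} = PiE K (\<lambda>i. {a i})" by (simp add: PiE_singleton PiE_iff)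
  thus "{a} \<in> sets (PiM K (\<lambda>_. measure_pmf q))" using assms(1) by (simp add: sets_PiM_I_finite)
next
  have "countable (PiE K (\<lambda>_. UNIV :: nat set))" using assms(1) by (intro countable_PiE) auto
  moreover have "A \<subseteq> PiE K (\<lambda>_. UNIV)" using assms(2) by (simp add: space_PiM)
  ultimately show "countable A" by (rule countable_subset[rotated])
qed

lemma sets_determined:
  assumes "finite J" "J \<subseteq> tree_verts d" and det: "\<And>\<omega>. Q \<omega> = Q (restrict \<omega> J)"
  shows "{\<omega> \<in> space (cone_space d q). Q \<omega>} \<in> sets (cone_space d q)"
proof -
  let ?N = "PiM J (\<lambda>_. measure_pmf q)"
  have "{\<omega> \<in> space (cone_space d q). Q \<omega>}
      = (\<lambda>\<omega>. restrict \<omega> J) -` {x \<in> space ?N. Q x} \<inter> space (cone_space d q)"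
    using assms(2) det by (auto simp: space_PiM space_cone_space PiE_def extensional_def)
  also have "\<dots> \<in> sets (cone_space d q)"
    unfolding cone_space_def
    by (rule measurable_sets[OF measurable_restrict_subset[OF assms(2)]])
       (rule sets_PiM_finite_discrete, use assms in auto)
  finally show ?thesis .
qed

lemma sets_coordinate:
  "u \<in> tree_verts d \<Longrightarrow> {\<omega> \<in> space (cone_space d q). P (\<omega> u)} \<in> sets (cone_space d q)"
  by (rule sets_determined[of "{u}"]) auto

lemma prob_coordinate:
  assumes "u \<in> tree_verts d"
  shows "measure (cone_space d q) {\<omega> \<in> space (cone_space d q). \<omega> u \<in> S} = measure_pmf.prob q S"
proof -
  have "distr (cone_space d q) (measure_pmf q) (\<lambda>\<omega>. \<omega> u) = measure_pmf q"
    unfolding cone_space_def using assms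
    by (intro distr_PiM_component) (simp_all add: prob_space_measure_pmf)
  moreover have "measure (distr (cone_space d q) (measure_pmf q) (\<lambda>\<omega>. \<omega> u)) S
      = measure (cone_space d q) ((\<lambda>\<omega>. \<omega> u) -` S \<inter> space (cone_space d q))"
    by (rule measure_distr) (use assms in \<open>auto simp: cone_space_def\<close>)
  ultimately show ?thesis by (simp add: vimage_def Int_def conj_commute)
qed

lemma prob_coordinate_eq:
  "u \<in> tree_verts d \<Longrightarrow> measure (cone_space d q) {\<omega> \<in> space (cone_space d q). \<omega> u = r} = pmf q r"
  using prob_coordinate[of u d q "{r}"] by (simp add: measure_pmf_single)

lemma prob_coordinate_outside:
  "u \<in> tree_verts d \<Longrightarrow> set_pmf q \<subseteq> S \<Longrightarrow>
     measure (cone_space d q) {\<omega> \<in> space (cone_space d q). \<omega> u \<notin> S} = 0"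
  using prob_coordinate[of u d q "- S"] by (auto simp: measure_pmf_zero_iff)

lemma indep_coordinates:
  assumes "I \<noteq> {}"
  shows "prob_space.indep_vars (PiM I (\<lambda>_. measure_pmf q)) (\<lambda>_. measure_pmf q) (\<lambda>i \<omega>. \<omega> i) I"
proof -
  let ?M = "PiM I (\<lambda>_. measure_pmf q)"
  interpret P: prob_space ?M by (rule prob_space_PiM) (simp add: prob_space_measure_pmf)
  have "distr ?M ?M (\<lambda>x. \<lambda>i\<in>I. x i) = distr ?M ?M (\<lambda>x. x)"
    by (rule distr_cong) (auto simp: space_PiM PiE_def extensional_def restrict_def)
  hence joint: "distr ?M ?M (\<lambda>x. \<lambda>i\<in>I. x i) = ?M" by simp
  have marginal: "distr ?M (measure_pmf q) (\<lambda>\<omega>. \<omega> i) = measure_pmf q" if "i \<in> I" for i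
    using that by (intro distr_PiM_component) (simp_all add: prob_space_measure_pmf)
  show ?thesis
    by (subst P.indep_vars_iff_distr_eq_PiM'[OF assms])
       (simp add: measurable_component_singleton, simp add: joint marginal cong: PiM_cong)
qed

lemma prob_disjoint_blocks:
  assumes L: "finite L" "L \<noteq> {}"
    and K: "\<And>j. j \<in> L \<Longrightarrow> finite (K j) \<and> K j \<subseteq> tree_verts d"
    and disj: "disjoint_family_on K L"
    and det: "\<And>j \<omega>. j \<in> L \<Longrightarrow> Q j \<omega> = Q j (restrict \<omega> (K j))"
  shows "measure (cone_space d q) {\<omega> \<in> space (cone_space d q). \<forall>j\<in>L. Q j \<omega>}
       = (\<Prod>j\<in>L. measure (cone_space d q) {\<omega> \<in> space (cone_space d q). Q j \<omega>})"
proof -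
  let ?C = "cone_space d q" and ?B = "\<lambda>\<omega> j. restrict (\<lambda>i. \<omega> i) (K j)"
  interpret C: prob_space ?C by (rule prob_space_cone_space)
  have nonempty: "tree_verts d \<noteq> {}" by (auto simp: tree_verts_def)
  have blocks: "C.indep_vars (\<lambda>j. PiM (K j) (\<lambda>_. measure_pmf q)) (\<lambda>j \<omega>. ?B \<omega> j) L"
    unfolding cone_space_def
    by (rule prob_space.indep_vars_restrict[OF _ indep_coordinates[OF nonempty]])
       (use prob_space_cone_space[of d q] K disj in \<open>simp_all add: cone_space_def\<close>)
  define A where "A j = {x \<in> space (PiM (K j) (\<lambda>_. measure_pmf q)). Q j x}" for j
  have event: "(\<lambda>\<omega>. ?B \<omega> j) -` A j \<inter> space ?C = {\<omega> \<in> space ?C. Q j \<omega>}" if j: "j \<in> L" for j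
  proof -
    have "(\<lambda>\<omega>. ?B \<omega> j) -` A j \<inter> space ?C = {\<omega> \<in> space ?C. Q j (restrict \<omega> (K j))}"
      by (auto simp: A_def space_PiM)
    also have "\<dots> = {\<omega> \<in> space ?C. Q j \<omega>}" by (simp only: det[OF j, symmetric])
    finally show ?thesis .
  qed
  have "C.prob (\<Inter>j\<in>L. (\<lambda>\<omega>. ?B \<omega> j) -` A j \<inter> space ?C)
      = (\<Prod>j\<in>L. C.prob ((\<lambda>\<omega>. ?B \<omega> j) -` A j \<inter> space ?C))"
    by (rule C.indep_varsD[OF blocks L(2,1) order_refl])
       (use K in \<open>auto simp: A_def intro!: sets_PiM_finite_discrete\<close>)
  moreover have "(\<Inter>j\<in>L. (\<lambda>\<omega>. ?B \<omega> j) -` A j \<inter> space ?C) = {\<omega> \<in> space ?C. \<forall>j\<in>L. Q j \<omega>}"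
    using event L(2) by auto
  ultimately show ?thesis using event by simp
qed

lemma prob_root_and_subtrees:
  assumes u: "u \<in> tree_verts d" and W: "finite W" "[] \<notin> W"
    and antichain: "\<And>w w'. w \<in> W \<Longrightarrow> w' \<in> W \<Longrightarrow> prefix w w' \<Longrightarrow> w = w'"
    and J: "\<And>w. w \<in> W \<Longrightarrow> finite (J w) \<and> J w \<subseteq> tree_verts d \<and> (\<forall>v\<in>J w. prefix (u @ w) v)"
    and det: "\<And>w \<omega>. w \<in> W \<Longrightarrow> Q w \<omega> = Q w (restrict \<omega> (J w))"
  shows "measure (cone_space d q) {\<omega> \<in> space (cone_space d q). \<omega> u = r \<and> (\<forall>w\<in>W. Q w \<omega>)}
       = pmf q r * (\<Prod>w\<in>W. measure (cone_space d q) {\<omega> \<in> space (cone_space d q). Q w \<omega>})"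
proof -
  let ?C = "cone_space d q" and ?L = "insert None (Some ` W)"
  define K where "K j = (case j of None \<Rightarrow> {u} | Some w \<Rightarrow> J w)" for j
  define P where "P j \<omega> = (case j of None \<Rightarrow> \<omega> u = r | Some w \<Rightarrow> Q w \<omega>)" for j \<omega>
  have u_not_below: "u \<notin> J w" if "w \<in> W" for w
    using J[OF that] W(2) that by (auto dest: prefix_length_le)
  have below_disjoint: "J w \<inter> J w' = {}" if "w \<in> W" "w' \<in> W" "w \<noteq> w'" for w w'
  proof (rule ccontr)
    assume "J w \<inter> J w' \<noteq> {}"
    then obtain v where "v \<in> J w" "v \<in> J w'" by blast
    hence "prefix (u @ w) v" "prefix (u @ w') v" using J that(1,2) by auto
    hence "prefix (u @ w) (u @ w') \<or> prefix (u @ w') (u @ w)" by (rule prefix_same_cases)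
    thus False using antichain that by auto
  qed
  have disj: "disjoint_family_on K ?L"
    unfolding disjoint_family_on_def K_def
    using u_not_below below_disjoint by (auto split: option.splits)
  have blocks: "finite (K j) \<and> K j \<subseteq> tree_verts d" if "j \<in> ?L" for j
  proof (cases j)
    case (Some w)
    thus ?thesis using that J[of w] by (auto simp: K_def)
  qed (use u in \<open>simp add: K_def\<close>)
  have det_blocks: "P j \<omega> = P j (restrict \<omega> (K j))" if "j \<in> ?L" for j \<omega>
  proof (cases j)
    case (Some w)
    with that have "w \<in> W" by auto
    thus ?thesis using Some by (simp add: P_def K_def det[symmetric])
  qed (simp add: P_def K_def)
  have "measure ?C {\<omega> \<in> space ?C. \<forall>j\<in>?L. P j \<omega>}
      = (\<Prod>j\<in>?L. measure ?C {\<omega> \<in> space ?C. P j \<omega>})"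
    by (rule prob_disjoint_blocks[where K=K and Q=P and L="?L", OF _ _ blocks disj det_blocks]) (use W(1) in auto)
  moreover have "(\<Prod>j\<in>?L. measure ?C {\<omega> \<in> space ?C. P j \<omega>})
      = measure ?C {\<omega> \<in> space ?C. \<omega> u = r} * (\<Prod>w\<in>W. measure ?C {\<omega> \<in> space ?C. Q w \<omega>})"
    using W(1) by (simp add: prod.reindex P_def)
  ultimately show ?thesis using prob_coordinate_eq[OF u] by (simp add: P_def)
qed

lemma prob_root_and_some_subtree:
  assumes u: "u \<in> tree_verts d" and W: "finite W" "[] \<notin> W"
    and antichain: "\<And>w w'. w \<in> W \<Longrightarrow> w' \<in> W \<Longrightarrow> prefix w w' \<Longrightarrow> w = w'"
    and J: "\<And>w. w \<in> W \<Longrightarrow> finite (J w) \<and> J w \<subseteq> tree_verts d \<and> (\<forall>v\<in>J w. prefix (u @ w) v)"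
    and det: "\<And>w \<omega>. w \<in> W \<Longrightarrow> Q w \<omega> = Q w (restrict \<omega> (J w))"
  shows "measure (cone_space d q) {\<omega> \<in> space (cone_space d q). \<omega> u = r \<and> (\<exists>w\<in>W. Q w \<omega>)}
       = pmf q r * (1 - (\<Prod>w\<in>W. 1 - measure (cone_space d q) {\<omega> \<in> space (cone_space d q). Q w \<omega>}))"
proof -
  let ?C = "cone_space d q"
  interpret C: prob_space ?C by (rule prob_space_cone_space)
  have sets_Q: "{\<omega> \<in> space ?C. Q w \<omega>} \<in> sets ?C" if "w \<in> W" for w
    by (rule sets_determined[of "J w" d "Q w", OF _ _ det[OF that]]) (use J[OF that] in auto)
  have none: "measure ?C {\<omega> \<in> space ?C. \<omega> u = r \<and> (\<forall>w\<in>W. \<not> Q w \<omega>)}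
      = pmf q r * (\<Prod>w\<in>W. 1 - measure ?C {\<omega> \<in> space ?C. Q w \<omega>})"
  proof -
    have det_not: "(\<not> Q w \<omega>) = (\<not> Q w (restrict \<omega> (J w)))" if "w \<in> W" for w \<omega>
      using det[OF that] by (rule arg_cong)
    have "measure ?C {\<omega> \<in> space ?C. \<omega> u = r \<and> (\<forall>w\<in>W. \<not> Q w \<omega>)}
        = pmf q r * (\<Prod>w\<in>W. measure ?C {\<omega> \<in> space ?C. \<not> Q w \<omega>})"
      using u W antichain J det_not by (rule prob_root_and_subtrees)
    moreover have "measure ?C {\<omega> \<in> space ?C. \<not> Q w \<omega>} = 1 - measure ?C {\<omega> \<in> space ?C. Q w \<omega>}"
      if "w \<in> W" for w
    proof -
      have "{\<omega> \<in> space ?C. \<not> Q w \<omega>} = space ?C - {\<omega> \<in> space ?C. Q w \<omega>}" by auto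
      thus ?thesis using C.prob_compl[OF sets_Q[OF that]] by simp
    qed
    ultimately show ?thesis by simp
  qed
  let ?E = "{\<omega> \<in> space ?C. \<omega> u = r}"
    and ?N = "{\<omega> \<in> space ?C. \<omega> u = r \<and> (\<forall>w\<in>W. \<not> Q w \<omega>)}"
  have sets_E: "?E \<in> sets ?C" by (rule sets_coordinate[OF u])
  have "?N = ?E \<inter> (space ?C - (\<Union>w\<in>W. {\<omega> \<in> space ?C. Q w \<omega>}))" by auto
  hence sets_N: "?N \<in> sets ?C" using sets_E sets_Q W(1) by auto
  have "{\<omega> \<in> space ?C. \<omega> u = r \<and> (\<exists>w\<in>W. Q w \<omega>)} = ?E - ?N" by auto
  hence "measure ?C {\<omega> \<in> space ?C. \<omega> u = r \<and> (\<exists>w\<in>W. Q w \<omega>)} = measure ?C ?E - measure ?C ?N"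
    using C.finite_measure_Diff[OF sets_E sets_N] by auto
  thus ?thesis using none prob_coordinate_eq[OF u] by (simp add: algebra_simps)
qed

lemma measure_split_coordinate:
  assumes "finite S" "u \<in> tree_verts d" "A \<in> sets (cone_space d q)" "\<And>\<omega>. \<omega> \<in> A \<Longrightarrow> \<omega> u \<in> S"
  shows "measure (cone_space d q) A = (\<Sum>r\<in>S. measure (cone_space d q) {\<omega> \<in> A. \<omega> u = r})"
proof -
  interpret C: prob_space "cone_space d q" by (rule prob_space_cone_space)
  have pieces: "{\<omega> \<in> A. \<omega> u = r} \<in> sets (cone_space d q)" for r
  proof -
    have "{\<omega> \<in> A. \<omega> u = r} = A \<inter> {\<omega> \<in> space (cone_space d q). \<omega> u = r}"
      using sets.sets_into_space[OF assms(3)] by auto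
    thus ?thesis using assms(3) sets_coordinate[OF assms(2)] by auto
  qed
  have "A = (\<Union>r\<in>S. {\<omega> \<in> A. \<omega> u = r})" using assms(4) by auto
  also have "measure (cone_space d q) \<dots> = (\<Sum>r\<in>S. measure (cone_space d q) {\<omega> \<in> A. \<omega> u = r})"
    by (rule C.finite_measure_finite_Union) (use assms(1) pieces in \<open>auto simp: disjoint_family_on_def\<close>)
  finally show ?thesis .
qed

lemma measure_restrict_support:
  assumes "set_pmf q \<subseteq> S" "u \<in> tree_verts d" "A \<in> sets (cone_space d q)"
  shows "measure (cone_space d q) A = measure (cone_space d q) {\<omega> \<in> A. \<omega> u \<in> S}"
proof -
  interpret C: prob_space "cone_space d q" by (rule prob_space_cone_space)
  let ?N = "{\<omega> \<in> space (cone_space d q). \<omega> u \<notin> S}"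
  have "?N \<in> null_sets (cone_space d q)"
    using prob_coordinate_outside[OF assms(2,1)] sets_coordinate[OF assms(2)]
    by (simp add: C.emeasure_eq_measure null_sets_def)
  hence "measure (cone_space d q) (A - ?N) = measure (cone_space d q) A"
    by (rule measure_Diff_null_set[OF assms(3)])
  moreover have "A - ?N = {\<omega> \<in> A. \<omega> u \<in> S}" using sets.sets_into_space[OF assms(3)] by auto
  ultimately show ?thesis by simp
qed

subsection \<open>The infected cluster\<close>


lemma tree_verts_prefix:
  assumes "v \<in> tree_verts d" "prefix w v" shows "w \<in> tree_verts d"
proof -
  obtain zs where v: "v = w @ zs" using assms(2) by (auto simp: prefix_def)
  show ?thesis unfolding tree_verts_def
  proof safe
    fix i assume i: "i < length w"
    have "v ! i < (if i = 0 then d + 1 else d)" using assms(1) i v by (auto simp: tree_verts_def)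
    thus "w ! i < (if i = 0 then d + 1 else d)" using i v by (simp add: nth_append)
  qed
qed

lemma tree_verts_append:
  assumes "u \<in> tree_verts d" "set w \<subseteq> {..<d}" shows "u @ w \<in> tree_verts d"
  unfolding tree_verts_def
proof safe
  fix i assume i: "i < length (u @ w)"
  show "(u @ w) ! i < (if i = 0 then d + 1 else d)"
  proof (cases "i < length u")
    case True thus ?thesis using assms(1) by (auto simp: tree_verts_def nth_append)
  next
    case False
    hence "w ! (i - length u) \<in> set w" using i by auto
    thus ?thesis using False assms(2) by (auto simp: nth_append)
  qed
qed

lemma cluster_subset_tree: "v \<in> cluster d r \<Longrightarrow> v \<in> tree_verts d"
  by (induction rule: cluster.induct) (auto simp: tree_verts_def cone_def)

lemma cluster_iff:
  "v \<in> cluster d r \<longleftrightarrow> v \<in> tree_verts d \<and>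
     (v = [] \<or> (\<exists>a. strict_prefix a v \<and> a \<in> cluster d r \<and> length v - length a \<le> r a))"
proof
  assume "v \<in> cluster d r"
  thus "v \<in> tree_verts d \<and> (v = [] \<or> (\<exists>a. strict_prefix a v \<and> a \<in> cluster d r \<and> length v - length a \<le> r a))"
  proof (induction rule: cluster.induct)
    case origin thus ?case by (auto simp: tree_verts_def)
  next
    case (spread u v)
    thus ?case by (cases "u = v") (auto simp: cone_def intro: strict_prefixI)
  qed
qed (auto intro: cluster.intros simp: cone_def)

lemma cluster_prefix_closed:
  assumes "v \<in> cluster d r" "prefix w v" shows "w \<in> cluster d r"
  using assms
proof (induction arbitrary: w rule: cluster.induct)
  case origin thus ?case by (simp add: cluster.origin)
next
  case (spread u v)
  have "prefix u v" using spread.hyps(2) by (simp add: cone_def)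
  from prefix_same_cases[OF spread.prems this] show ?case
  proof
    assume "prefix u w"
    moreover have "w \<in> tree_verts d" "length w \<le> length v"
      using spread.hyps(2) spread.prems by (auto simp: cone_def intro: tree_verts_prefix prefix_length_le)
    ultimately have "w \<in> cone d r u" using spread.hyps(2) by (auto simp: cone_def)
    thus ?thesis by (rule cluster.spread[OF spread.hyps(1)])
  qed (use spread.IH in blast)
qed

lemma cluster_determined_by_ancestors:
  assumes "\<And>a. strict_prefix a v \<Longrightarrow> r a = r' a"
  shows "v \<in> cluster d r \<longleftrightarrow> v \<in> cluster d r'"
  using assms
proof (induction "length v" arbitrary: v rule: less_induct)
  case less
  have IH: "a \<in> cluster d r \<longleftrightarrow> a \<in> cluster d r'" if "strict_prefix a v" for a
    using that less prefix_length_less prefix_order.less_trans by blast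
  have "(\<exists>a. strict_prefix a v \<and> a \<in> cluster d r \<and> length v - length a \<le> r a) \<longleftrightarrow>
        (\<exists>a. strict_prefix a v \<and> a \<in> cluster d r' \<and> length v - length a \<le> r' a)"
    using IH less.prems by metis
  thus ?case by (subst (1 2) cluster_iff) simp
qed

text \<open>Hence each event \<open>v \<in> I\<close> is determined by finitely many radii, and measurable.\<close>
lemma sets_in_cluster:
  "{\<omega> \<in> space (cone_space d q). v \<in> cluster d \<omega>} \<in> sets (cone_space d q)"
proof (cases "v \<in> tree_verts d")
  case True
  let ?K = "{a. strict_prefix a v}"
  have "finite ?K" by (rule finite_subset[of _ "set (prefixes v)"]) (auto simp: strict_prefix_def)
  moreover have "?K \<subseteq> tree_verts d" using True by (auto intro: tree_verts_prefix)
  moreover have "v \<in> cluster d \<omega> \<longleftrightarrow> v \<in> cluster d (restrict \<omega> ?K)" for \<omega>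
    by (rule cluster_determined_by_ancestors) simp
  ultimately show ?thesis by (rule sets_determined)
next
  case False
  hence "{\<omega> \<in> space (cone_space d q). v \<in> cluster d \<omega>} = {}" using cluster_subset_tree by blast
  thus ?thesis by (simp only: sets.empty_sets)
qed

definition reaches_depth :: "nat \<Rightarrow> nat pmf \<Rightarrow> nat \<Rightarrow> (nat list \<Rightarrow> nat) set" where
  "reaches_depth d q k = {\<omega> \<in> space (cone_space d q). \<exists>v\<in>cluster d \<omega>. k \<le> length v}"

lemma sets_reaches_depth: "reaches_depth d q k \<in> sets (cone_space d q)"
proof -
  have "reaches_depth d q k = (\<Union>v\<in>{v. k \<le> length v}. {\<omega> \<in> space (cone_space d q). v \<in> cluster d \<omega>})"
    by (auto simp: reaches_depth_def)
  thus ?thesis by (auto intro: sets.countable_UN' sets_in_cluster)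
qed

lemma decseq_reaches_depth: "decseq (reaches_depth d q)"
  unfolding decseq_def reaches_depth_def by (fastforce intro: order_trans)

text \<open>Balls of the locally finite tree are finite, so the cluster is infinite iff it
  reaches every depth.\<close>
lemma finite_tree_ball: "finite {v \<in> tree_verts d. length v \<le> k}"
proof (rule finite_subset[OF _ finite_lists_length_le[of "{..<d+1}" k]])
  have "set v \<subseteq> {..<d+1}" if "v \<in> tree_verts d" for v
    using that by (auto simp: tree_verts_def in_set_conv_nth split: if_splits) fastforce
  thus "{v \<in> tree_verts d. length v \<le> k} \<subseteq> {xs. set xs \<subseteq> {..<d + 1} \<and> length xs \<le> k}"
    by auto
qed simp

lemma infinite_cluster_iff: "infinite (cluster d r) \<longleftrightarrow> (\<forall>k. \<exists>v\<in>cluster d r. k \<le> length v)"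
proof
  assume "infinite (cluster d r)"
  show "\<forall>k. \<exists>v\<in>cluster d r. k \<le> length v"
  proof (rule ccontr)
    assume "\<not> ?thesis"
    then obtain k where "\<forall>v\<in>cluster d r. length v < k" by (auto simp: not_le)
    hence "cluster d r \<subseteq> {v \<in> tree_verts d. length v \<le> k}" using cluster_subset_tree by fastforce
    thus False using \<open>infinite (cluster d r)\<close> finite_tree_ball finite_subset by blast
  qed
next
  assume deep: "\<forall>k. \<exists>v\<in>cluster d r. k \<le> length v"
  show "infinite (cluster d r)"
  proof
    assume "finite (cluster d r)"
    moreover obtain v where "v \<in> cluster d r" "Suc (Max (length ` cluster d r)) \<le> length v"
      using deep by blast
    ultimately have "length v \<le> Max (length ` cluster d r)" by (auto intro: Max_ge)
    thus False using \<open>Suc (Max (length ` cluster d r)) \<le> length v\<close> by simp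
  qed
qed

lemma survival_event_eq: "survival_event d q = (\<Inter>k. reaches_depth d q k)"
  by (auto simp: survival_event_def reaches_depth_def infinite_cluster_iff)

text \<open>Continuity from above: \<open>P(V)\<close> is the limit of the probabilities of reaching depth \<open>k\<close>.\<close>
lemma survival_event_limit:
  "(\<lambda>k. measure (cone_space d q) (reaches_depth d q k))
     \<longlonglongrightarrow> measure (cone_space d q) (survival_event d q)"
proof -
  interpret C: prob_space "cone_space d q" by (rule prob_space_cone_space)
  show ?thesis unfolding survival_event_eq
    by (rule C.finite_Lim_measure_decseq) (auto intro: sets_reaches_depth decseq_reaches_depth)
qed

subsection \<open>Survival: comparison with a Galton--Watson process\<close>


text \<open>The downward words of length \<open>r\<close>: \<open>u @ w\<close> for \<open>w \<in> words d r\<close> are the \<open>d\<^sup>r\<close> descendants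
  of a non-root vertex \<open>u\<close> at distance \<open>r\<close>.\<close>
definition words :: "nat \<Rightarrow> nat \<Rightarrow> nat list set" where
  "words d r = {w. set w \<subseteq> {..<d} \<and> length w = r}"

lemma finite_words: "finite (words d r)"
  unfolding words_def by (rule finite_lists_length_eq) simp

lemma card_words: "card (words d r) = d ^ r"
  unfolding words_def using card_lists_length_eq[of "{..<d}" r] by simp

lemma finite_downward_region: "finite {u @ x | x. set x \<subseteq> {..<d::nat} \<and> length x < m}"
proof -
  have "{u @ x | x. set x \<subseteq> {..<d} \<and> length x < m}
      \<subseteq> (\<lambda>x. u @ x) ` {x. set x \<subseteq> {..<d} \<and> length x \<le> m}" by auto
  thus ?thesis by (rule finite_subset) (intro finite_imageI finite_lists_length_le; simp)
qed

text \<open>A chain of \<open>k\<close> jumps from \<open>u\<close>: at each visited vertex \<open>v\<close> the radius satisfies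
  \<open>1 \<le> R\<^sub>v \<le> n\<close>, and the chain continues at one of the \<open>d\<^sup>R\<^sup>v\<close> descendants at distance exactly
  \<open>R\<^sub>v\<close>. All these descendants are infected, and the chains form a Galton--Watson tree.\<close>
fun jump_chain :: "nat \<Rightarrow> nat \<Rightarrow> (nat list \<Rightarrow> nat) \<Rightarrow> nat \<Rightarrow> nat list \<Rightarrow> bool" where
  "jump_chain d n \<omega> 0 u = True"
| "jump_chain d n \<omega> (Suc k) u =
     (1 \<le> \<omega> u \<and> \<omega> u \<le> n \<and> (\<exists>w\<in>words d (\<omega> u). jump_chain d n \<omega> k (u @ w)))"

definition jump_region :: "nat \<Rightarrow> nat \<Rightarrow> nat \<Rightarrow> nat list \<Rightarrow> nat list set" where
  "jump_region d n k u = {u @ x | x. set x \<subseteq> {..<d} \<and> length x < k * n}"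

lemma jump_chain_cong:
  assumes "n \<ge> 1" "\<And>v. v \<in> jump_region d n k u \<Longrightarrow> \<omega> v = \<omega>' v"
  shows "jump_chain d n \<omega> k u = jump_chain d n \<omega>' k u"
  using assms(2)
proof (induction k arbitrary: u)
  case (Suc k)
  have "u \<in> jump_region d n (Suc k) u" using assms(1) by (force simp: jump_region_def)
  hence root: "\<omega> u = \<omega>' u" using Suc.prems by blast
  have "jump_chain d n \<omega> k (u @ w) = jump_chain d n \<omega>' k (u @ w)"
    if "\<omega> u \<le> n" "w \<in> words d (\<omega> u)" for w
  proof (rule Suc.IH)
    fix v assume "v \<in> jump_region d n k (u @ w)"
    hence "v \<in> jump_region d n (Suc k) u" using that by (fastforce simp: jump_region_def words_def)
    thus "\<omega> v = \<omega>' v" by (rule Suc.prems)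
  qed
  thus ?case using root by auto
qed simp

lemma jump_chain_determined:
  "n \<ge> 1 \<Longrightarrow> jump_chain d n \<omega> k u = jump_chain d n (restrict \<omega> (jump_region d n k u)) k u"
  by (rule jump_chain_cong) auto

lemma jump_region_below:
  assumes "u \<in> tree_verts d"
  shows "finite (jump_region d n k u) \<and> jump_region d n k u \<subseteq> tree_verts d
       \<and> (\<forall>v\<in>jump_region d n k u. prefix u v)"
  using assms finite_downward_region by (auto simp: jump_region_def intro: tree_verts_append)

lemma jump_chain_in_cluster:
  assumes "u \<in> cluster d \<omega>" "jump_chain d n \<omega> k u"
  shows "\<exists>v\<in>cluster d \<omega>. length u + k \<le> length v"
  using assms
proof (induction k arbitrary: u)
  case (Suc k)
  then obtain w where w: "w \<in> words d (\<omega> u)" "jump_chain d n \<omega> k (u @ w)" "1 \<le> \<omega> u" by auto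
  have "u @ w \<in> tree_verts d"
    using w(1) cluster_subset_tree[OF Suc.prems(1)] by (auto simp: words_def intro: tree_verts_append)
  hence "u @ w \<in> cone d \<omega> u" using w(1) by (auto simp: cone_def words_def)
  hence "u @ w \<in> cluster d \<omega>" by (rule cluster.spread[OF Suc.prems(1)])
  then obtain v where "v \<in> cluster d \<omega>" "length (u @ w) + k \<le> length v"
    using Suc.IH w(2) by blast
  thus ?case using w by (auto simp: words_def intro!: bexI[of _ v])
qed auto

definition jump_prob :: "nat \<Rightarrow> nat pmf \<Rightarrow> nat \<Rightarrow> nat \<Rightarrow> nat list \<Rightarrow> real" where
  "jump_prob d q n k u = measure (cone_space d q) {\<omega> \<in> space (cone_space d q). jump_chain d n \<omega> k u}"

lemma sets_jump_chain:
  "n \<ge> 1 \<Longrightarrow> u \<in> tree_verts d \<Longrightarrow>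
     {\<omega> \<in> space (cone_space d q). jump_chain d n \<omega> k u} \<in> sets (cone_space d q)"
  using jump_region_below[of u d n k] jump_chain_determined[of n d _ k u]
  by (intro sets_determined[of "jump_region d n k u"]) auto

text \<open>The Galton--Watson recursion: \<open>R\<^sub>u = r\<close> with probability \<open>P(R = r)\<close>, and then the chain
  continues from one of \<open>d\<^sup>r\<close> independent subtrees.\<close>
lemma jump_prob_Suc:
  assumes n: "n \<ge> 1" and u: "u \<in> tree_verts d"
  shows "jump_prob d q n (Suc k) u
       = (\<Sum>r\<in>{1..n}. pmf q r * (1 - (\<Prod>w\<in>words d r. 1 - jump_prob d q n k (u @ w))))"
proof -
  let ?C = "cone_space d q" and ?A = "{\<omega> \<in> space (cone_space d q). jump_chain d n \<omega> (Suc k) u}"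
  have "measure ?C ?A = (\<Sum>r\<in>{1..n}. measure ?C {\<omega> \<in> ?A. \<omega> u = r})"
    by (rule measure_split_coordinate[OF _ u sets_jump_chain[OF n u]]) auto
  also have "\<dots> = (\<Sum>r\<in>{1..n}. pmf q r * (1 - (\<Prod>w\<in>words d r. 1 - jump_prob d q n k (u @ w))))"
  proof (rule sum.cong[OF refl])
    fix r assume r: "r \<in> {1..n}"
    have uw: "u @ w \<in> tree_verts d" if "w \<in> words d r" for w
      using that u by (auto simp: words_def intro: tree_verts_append)
    have "{\<omega> \<in> ?A. \<omega> u = r} = {\<omega> \<in> space ?C. \<omega> u = r \<and> (\<exists>w\<in>words d r. jump_chain d n \<omega> k (u @ w))}"
      using r by auto
    also have "measure ?C \<dots> = pmf q r * (1 - (\<Prod>w\<in>words d r. 1 - jump_prob d q n k (u @ w)))"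
      unfolding jump_prob_def
    proof (rule prob_root_and_some_subtree[OF u finite_words])
      show "[] \<notin> words d r" using r by (auto simp: words_def)
      show "w = w'" if "w \<in> words d r" "w' \<in> words d r" "prefix w w'" for w w'
        using that by (auto simp: words_def prefix_def)
      show "finite (jump_region d n k (u @ w)) \<and> jump_region d n k (u @ w) \<subseteq> tree_verts d
          \<and> (\<forall>v\<in>jump_region d n k (u @ w). prefix (u @ w) v)" if "w \<in> words d r" for w
        by (rule jump_region_below[OF uw[OF that]])
      show "jump_chain d n \<omega> k (u @ w) = jump_chain d n (restrict \<omega> (jump_region d n k (u @ w))) k (u @ w)"
        for w \<omega> by (rule jump_chain_determined[OF n])
    qed
    finally show "measure ?C {\<omega> \<in> ?A. \<omega> u = r} = \<dots>" .
  qed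
  finally show ?thesis by (simp add: jump_prob_def)
qed

lemma jump_prob_lower:
  assumes n: "n \<ge> 1" and c: "0 \<le> c" "c \<le> 1"
    and below: "c \<le> (\<Sum>r\<in>{1..n}. pmf q r * (1 - (1 - c) ^ (d ^ r)))"
  shows "u \<in> tree_verts d \<Longrightarrow> c \<le> jump_prob d q n k u"
proof (induction k arbitrary: u)
  case 0
  interpret C: prob_space "cone_space d q" by (rule prob_space_cone_space)
  show ?case using c by (simp add: jump_prob_def C.prob_space)
next
  case (Suc k)
  have "(\<Prod>w\<in>words d r. 1 - jump_prob d q n k (u @ w)) \<le> (1 - c) ^ (d ^ r)" for r
  proof -
    have "(\<Prod>w\<in>words d r. 1 - jump_prob d q n k (u @ w)) \<le> (\<Prod>w\<in>words d r. 1 - c)"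
    proof (rule prod_mono)
      fix w assume "w \<in> words d r"
      hence "c \<le> jump_prob d q n k (u @ w)"
        using Suc by (auto simp: words_def intro: tree_verts_append)
      moreover have "jump_prob d q n k (u @ w) \<le> 1"
        by (simp add: jump_prob_def prob_space.prob_le_1[OF prob_space_cone_space])
      ultimately show "0 \<le> 1 - jump_prob d q n k (u @ w) \<and> 1 - jump_prob d q n k (u @ w) \<le> 1 - c"
        by simp
    qed
    thus ?thesis by (simp add: card_words)
  qed
  hence "(\<Sum>r\<in>{1..n}. pmf q r * (1 - (1 - c) ^ (d ^ r)))
      \<le> (\<Sum>r\<in>{1..n}. pmf q r * (1 - (\<Prod>w\<in>words d r. 1 - jump_prob d q n k (u @ w))))"
    by (intro sum_mono mult_left_mono) auto
  thus ?case using below jump_prob_Suc[OF n Suc.prems] by simp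
qed

text \<open>Jump chains from the origin reach depth \<open>k\<close>, so \<open>c\<close> also bounds \<open>P(reach depth k)\<close>.\<close>
lemma reaches_depth_lower:
  assumes "n \<ge> 1" "0 \<le> c" "c \<le> 1" "c \<le> (\<Sum>r\<in>{1..n}. pmf q r * (1 - (1 - c) ^ (d ^ r)))"
  shows "c \<le> measure (cone_space d q) (reaches_depth d q k)"
proof -
  interpret C: prob_space "cone_space d q" by (rule prob_space_cone_space)
  have "[] \<in> tree_verts d" by (simp add: tree_verts_def)
  hence "c \<le> jump_prob d q n k []" by (rule jump_prob_lower[OF assms])
  also have "\<dots> \<le> measure (cone_space d q) (reaches_depth d q k)"
    unfolding jump_prob_def
    using jump_chain_in_cluster[OF cluster.origin]
    by (intro C.finite_measure_mono[OF _ sets_reaches_depth]) (fastforce simp: reaches_depth_def)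
  finally show ?thesis .
qed

lemma one_minus_power_lower:
  fixes c :: real assumes c: "0 \<le> c" "c \<le> 1"
  shows "real N * c - (real N)\<^sup>2 / 2 * c\<^sup>2 \<le> 1 - (1 - c) ^ N"
proof -
  have "(1 - c) ^ N \<le> 1 - real N * c + real N * (real N - 1) / 2 * c\<^sup>2"
  proof (induction N)
    case (Suc N)
    have "(1 - c) ^ Suc N \<le> (1 - c) * (1 - real N * c + real N * (real N - 1) / 2 * c\<^sup>2)"
      using Suc c by (simp add: mult_left_mono)
    also have "\<dots> = 1 - real (Suc N) * c + real (Suc N) * (real (Suc N) - 1) / 2 * c\<^sup>2
                   - real N * (real N - 1) / 2 * c ^ 3"
      by (simp add: power2_eq_square power3_eq_cube field_simps)
    also have "\<dots> \<le> 1 - real (Suc N) * c + real (Suc N) * (real (Suc N) - 1) / 2 * c\<^sup>2"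
      using c by (cases N) auto
    finally show ?case .
  qed simp
  moreover have "real N * (real N - 1) / 2 * c\<^sup>2 \<le> (real N)\<^sup>2 / 2 * c\<^sup>2"
    by (intro mult_right_mono divide_right_mono) (auto simp: power2_eq_square algebra_simps)
  ultimately show ?thesis by linarith
qed

lemma supercritical_point_below:
  fixes a :: "nat \<Rightarrow> real" and N :: "nat \<Rightarrow> nat"
  assumes S: "finite S" and a: "\<And>r. r \<in> S \<Longrightarrow> 0 \<le> a r"
    and mean: "(\<Sum>r\<in>S. a r * N r) > 1"
  shows "\<exists>c>0. c \<le> 1 \<and> c \<le> (\<Sum>r\<in>S. a r * (1 - (1 - c) ^ N r))"
proof -
  define m where "m = (\<Sum>r\<in>S. a r * N r)"
  define s where "s = (\<Sum>r\<in>S. a r * (real (N r))\<^sup>2)"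
  define c where "c = (m - 1) / s"
  have "m \<le> s" unfolding m_def s_def
  proof (rule sum_mono)
    fix r assume "r \<in> S"
    have "real (N r) \<le> (real (N r))\<^sup>2" by (cases "N r") (auto simp: power2_eq_square)
    thus "a r * N r \<le> a r * (real (N r))\<^sup>2" using a[OF \<open>r \<in> S\<close>] by (rule mult_left_mono)
  qed
  hence s_pos: "s > 0" and c: "0 < c" "c \<le> 1" using mean by (auto simp: c_def m_def field_simps)
  have "c \<le> c * (m - (m - 1) / 2)" using c(1) mean by (simp add: m_def field_simps)
  also have "\<dots> = m * c - s / 2 * c\<^sup>2" using s_pos by (simp add: c_def power2_eq_square field_simps)
  also have "\<dots> = (\<Sum>r\<in>S. a r * (real (N r) * c - (real (N r))\<^sup>2 / 2 * c\<^sup>2))"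
    by (simp add: m_def s_def sum_subtractf sum_distrib_left sum_distrib_right sum_divide_distrib
        algebra_simps)
  also have "\<dots> \<le> (\<Sum>r\<in>S. a r * (1 - (1 - c) ^ N r))"
    using a c by (intro sum_mono mult_left_mono one_minus_power_lower) auto
  finally show ?thesis using c by blast
qed

theorem survival_positive:
  assumes mean: "(\<Sum>r\<in>{1..n}. pmf q r * real d ^ r) > 1"
  shows "measure (cone_space d q) (survival_event d q) > 0"
proof -
  have "n \<ge> 1" using mean by (cases n) auto
  obtain c where c: "0 < c" "c \<le> 1" "c \<le> (\<Sum>r\<in>{1..n}. pmf q r * (1 - (1 - c) ^ (d ^ r)))"
    using supercritical_point_below[of "{1..n}" "pmf q" "\<lambda>r. d ^ r"] mean by auto
  have "c \<le> measure (cone_space d q) (reaches_depth d q k)" for k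
    using reaches_depth_lower[OF \<open>n \<ge> 1\<close>] c by simp
  hence "c \<le> measure (cone_space d q) (survival_event d q)"
    by (intro LIMSEQ_le_const[OF survival_event_limit]) auto
  thus ?thesis using c(1) by simp
qed

subsection \<open>Extinction: carried paths and a potential argument\<close>


text \<open>The parameter \<open>s\<close> is the
  residual reach inherited from strict ancestors; the infection passes from \<open>u\<close> to a child
  iff \<open>max s R\<^sub>u \<ge> 1\<close>, and the child inherits the residual reach \<open>max s R\<^sub>u - 1\<close>.\<close>
fun carried_path :: "nat \<Rightarrow> (nat list \<Rightarrow> nat) \<Rightarrow> nat \<Rightarrow> nat list \<Rightarrow> nat \<Rightarrow> bool" where
  "carried_path d \<omega> 0 u s = True"
| "carried_path d \<omega> (Suc k) u s =
     (1 \<le> max s (\<omega> u) \<and> (\<exists>c<d. carried_path d \<omega> k (u @ [c]) (max s (\<omega> u) - 1)))"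

definition carried_region :: "nat \<Rightarrow> nat \<Rightarrow> nat list \<Rightarrow> nat list set" where
  "carried_region d k u = {u @ x | x. set x \<subseteq> {..<d} \<and> length x < k}"

lemma carried_path_cong:
  assumes "\<And>v. v \<in> carried_region d k u \<Longrightarrow> \<omega> v = \<omega>' v"
  shows "carried_path d \<omega> k u s = carried_path d \<omega>' k u s"
  using assms
proof (induction k arbitrary: u s)
  case (Suc k)
  have "u \<in> carried_region d (Suc k) u" by (force simp: carried_region_def)
  hence root: "\<omega> u = \<omega>' u" using Suc.prems by blast
  have "carried_path d \<omega> k (u @ [c]) t = carried_path d \<omega>' k (u @ [c]) t" if "c < d" for c t
  proof (rule Suc.IH)
    fix v assume "v \<in> carried_region d k (u @ [c])"
    then obtain x where "v = u @ c # x" "set x \<subseteq> {..<d}" "length x < k"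
      by (auto simp: carried_region_def)
    hence "v \<in> carried_region d (Suc k) u" using that by (force simp: carried_region_def)
    thus "\<omega> v = \<omega>' v" by (rule Suc.prems)
  qed
  thus ?case using root by (simp del: One_nat_def) blast
qed simp

lemma carried_region_below:
  assumes "u \<in> tree_verts d"
  shows "finite (carried_region d k u) \<and> carried_region d k u \<subseteq> tree_verts d
       \<and> (\<forall>v\<in>carried_region d k u. prefix u v)"
  using assms finite_downward_region by (auto simp: carried_region_def intro: tree_verts_append)

lemma carried_path_determined:
  "carried_path d \<omega> k u s = carried_path d (restrict \<omega> (carried_region d k u)) k u s"
  by (rule carried_path_cong) auto

lemma sets_carried_path:
  "u \<in> tree_verts d \<Longrightarrow>
     {\<omega> \<in> space (cone_space d q). carried_path d \<omega> k u s} \<in> sets (cone_space d q)"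
  using carried_region_below[of u d k] carried_path_determined[of d _ k u s]
  by (intro sets_determined[of "carried_region d k u"]) auto

lemma carried_path_from_cluster:
  assumes "u \<noteq> []" "u \<in> cluster d \<omega>"
    and reach: "\<And>a. strict_prefix a u \<Longrightarrow> a \<in> cluster d \<omega> \<Longrightarrow> \<omega> a \<le> s + (length u - length a)"
    and "v \<in> cluster d \<omega>" "prefix u v" "length u + k \<le> length v"
  shows "carried_path d \<omega> k u s"
  using assms
proof (induction k arbitrary: u s)
  case (Suc k)
  obtain zs where "v = u @ zs" using Suc.prems(5) by (auto simp: prefix_def)
  moreover have "zs \<noteq> []" using Suc.prems(6) calculation by auto
  ultimately obtain c zs' where v: "v = u @ c # zs'" by (auto simp: neq_Nil_conv)
  define u' where "u' = u @ [c]"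
  have "length u < length v" "v ! length u = c" by (simp_all add: v)
  hence "c < (if length u = 0 then d + 1 else d)"
    using cluster_subset_tree[OF Suc.prems(4)] unfolding tree_verts_def by blast
  hence "c < d" using Suc.prems(1) by simp
  have "prefix u' v" using v by (simp add: u'_def)
  hence u'_in: "u' \<in> cluster d \<omega>" by (rule cluster_prefix_closed[OF Suc.prems(4)])
  define m where "m = max s (\<omega> u)"
  have reach': "\<omega> b \<le> m + (length u - length b)" if "strict_prefix b u'" "b \<in> cluster d \<omega>" for b
  proof (cases "b = u")
    case False
    hence "strict_prefix b u" using that(1) by (auto simp: u'_def strict_prefix_def)
    thus ?thesis using Suc.prems(3)[OF _ that(2)] by (simp add: m_def)
  qed (simp add: m_def)
  obtain a where a: "strict_prefix a u'" "a \<in> cluster d \<omega>" "length u' - length a \<le> \<omega> a"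
    using u'_in cluster_iff[of u'] by (auto simp: u'_def)
  have "length a \<le> length u" using a(1) by (auto simp: u'_def dest: prefix_length_less)
  hence m1: "1 \<le> m" using reach'[OF a(1,2)] a(3) by (simp add: u'_def)
  have "carried_path d \<omega> k u' (m - 1)"
  proof (rule Suc.IH)
    show "\<omega> b \<le> m - 1 + (length u' - length b)" if "strict_prefix b u'" "b \<in> cluster d \<omega>" for b
      using reach'[OF that] m1 that(1) prefix_length_less[OF that(1)] by (simp add: u'_def)
  qed (use u'_in \<open>prefix u' v\<close> Suc.prems(4,6) in \<open>auto simp: u'_def\<close>)
  thus ?case using m1 \<open>c < d\<close> by (auto simp: m_def u'_def)
qed simp

lemma carried_path_from_origin:
  assumes "v \<in> cluster d \<omega>" "Suc k \<le> length v"
  shows "1 \<le> \<omega> [] \<and> (\<exists>c<d+1. carried_path d \<omega> k [c] (\<omega> [] - 1))"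
proof -
  obtain c v' where v: "v = c # v'" using assms(2) by (cases v) auto
  have "c < d + 1" using cluster_subset_tree[OF assms(1)] v by (auto simp: tree_verts_def)
  have "prefix [c] v" using v by simp
  hence c_in: "[c] \<in> cluster d \<omega>" by (rule cluster_prefix_closed[OF assms(1)])
  have only_origin: "a = []" if "strict_prefix a [c]" for a
    using that by (cases a) (auto simp: strict_prefix_def)
  have root: "1 \<le> \<omega> []"
    using c_in cluster_iff[of "[c]"] only_origin by fastforce
  have "carried_path d \<omega> k [c] (\<omega> [] - 1)"
    by (rule carried_path_from_cluster[OF _ c_in _ assms(1) \<open>prefix [c] v\<close>])
       (use assms(2) v root only_origin in force)+
  thus ?thesis using root \<open>c < d + 1\<close> by blast
qed

definition carried_prob :: "nat \<Rightarrow> nat pmf \<Rightarrow> nat \<Rightarrow> nat list \<Rightarrow> nat \<Rightarrow> real" where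
  "carried_prob d q k u s = measure (cone_space d q) {\<omega> \<in> space (cone_space d q). carried_path d \<omega> k u s}"

lemma carried_prob_le_1: "carried_prob d q k u s \<le> 1"
  by (simp add: carried_prob_def prob_space.prob_le_1[OF prob_space_cone_space])

text \<open>Exact one-step decomposition: given \<open>R\<^sub>u = r\<close> with \<open>m = max s r \<ge> 1\<close>, the carried paths
  through the \<open>d\<close> children of \<open>u\<close> are independent.\<close>
lemma carried_prob_root_value:
  assumes u: "u \<in> tree_verts d" and m: "1 \<le> max s r"
  shows "measure (cone_space d q) {\<omega> \<in> space (cone_space d q). \<omega> u = r \<and> carried_path d \<omega> (Suc k) u s}
       = pmf q r * (1 - (\<Prod>c<d. 1 - carried_prob d q k (u @ [c]) (max s r - 1)))"
proof -
  let ?C = "cone_space d q" and ?W = "(\<lambda>c. [c]) ` {..<d}"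
  have "{\<omega> \<in> space ?C. \<omega> u = r \<and> carried_path d \<omega> (Suc k) u s}
      = {\<omega> \<in> space ?C. \<omega> u = r \<and> (\<exists>w\<in>?W. carried_path d \<omega> k (u @ w) (max s r - 1))}"
    using m by auto
  also have "measure ?C \<dots> = pmf q r * (1 - (\<Prod>w\<in>?W. 1 - carried_prob d q k (u @ w) (max s r - 1)))"
    unfolding carried_prob_def
  proof (rule prob_root_and_some_subtree[OF u])
    show "finite ?W" "[] \<notin> ?W" by auto
    show "w = w'" if "w \<in> ?W" "w' \<in> ?W" "prefix w w'" for w w' using that by auto
    show "finite (carried_region d k (u @ w)) \<and> carried_region d k (u @ w) \<subseteq> tree_verts d
        \<and> (\<forall>v\<in>carried_region d k (u @ w). prefix (u @ w) v)" if "w \<in> ?W" for w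
      using that u by (intro carried_region_below) (auto intro: tree_verts_append)
  qed (rule carried_path_determined)
  also have "(\<Prod>w\<in>?W. 1 - carried_prob d q k (u @ w) (max s r - 1))
      = (\<Prod>c<d. 1 - carried_prob d q k (u @ [c]) (max s r - 1))"
    by (simp add: prod.reindex inj_on_def)
  finally show ?thesis .
qed

text \<open>The bound for one more step, given a bound \<open>g\<close> on the residual reach of a child:
  at least one of the \<open>d\<close> children must carry on.\<close>
definition spread_bound :: "nat \<Rightarrow> (nat \<Rightarrow> real) \<Rightarrow> nat \<Rightarrow> real" where
  "spread_bound d g m = (if 1 \<le> m then 1 - (1 - g (m - 1)) ^ d else 0)"

lemma spread_bound_range:
  "(\<And>t. 0 \<le> g t \<and> g t \<le> 1) \<Longrightarrow> 0 \<le> spread_bound d g m \<and> spread_bound d g m \<le> 1"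
  unfolding spread_bound_def by (auto intro: power_le_one)

lemma spread_bound_mono:
  assumes "\<And>t. g t \<le> g' t" "\<And>t. 0 \<le> g t" "\<And>t. g' t \<le> 1"
  shows "spread_bound d g m \<le> spread_bound d g' m"
  using assms[of "m - 1"] by (auto simp: spread_bound_def intro!: power_mono)

text \<open>One step of the recursion: splitting by the value of \<open>R\<^sub>u \<le> n\<close> (almost surely), a bound
  \<open>g\<close> for paths of length \<open>k\<close> gives a bound for paths of length \<open>k + 1\<close>.\<close>
lemma carried_prob_Suc_le:
  assumes u: "u \<in> tree_verts d" and q: "set_pmf q \<subseteq> {..n}"
    and IH: "\<And>v t. v \<in> tree_verts d \<Longrightarrow> carried_prob d q k v t \<le> g t"
    and g: "\<And>t. 0 \<le> g t \<and> g t \<le> 1"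
  shows "carried_prob d q (Suc k) u s \<le> (\<Sum>r\<le>n. pmf q r * spread_bound d g (max s r))"
proof -
  let ?C = "cone_space d q" and ?A = "{\<omega> \<in> space (cone_space d q). carried_path d \<omega> (Suc k) u s}"
  have sets_A: "?A \<in> sets ?C" by (rule sets_carried_path[OF u])
  have "carried_prob d q (Suc k) u s = measure ?C {\<omega> \<in> ?A. \<omega> u \<in> {..n}}"
    unfolding carried_prob_def by (rule measure_restrict_support[OF q u sets_A])
  also have "\<dots> = (\<Sum>r\<le>n. measure ?C {\<omega> \<in> ?A. \<omega> u = r})"
  proof -
    have "{\<omega> \<in> ?A. \<omega> u \<in> {..n}} = ?A \<inter> {\<omega> \<in> space ?C. \<omega> u \<in> {..n}}" by auto
    also have "\<dots> \<in> sets ?C" using sets_A sets_coordinate[OF u] by (rule sets.Int)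
    finally have sets_A': "{\<omega> \<in> ?A. \<omega> u \<in> {..n}} \<in> sets ?C" .
    have "measure ?C {\<omega> \<in> ?A. \<omega> u \<in> {..n}}
        = (\<Sum>r\<le>n. measure ?C {\<omega> \<in> {\<omega> \<in> ?A. \<omega> u \<in> {..n}}. \<omega> u = r})"
      by (rule measure_split_coordinate[OF _ u sets_A']) auto
    also have "\<dots> = (\<Sum>r\<le>n. measure ?C {\<omega> \<in> ?A. \<omega> u = r})"
      by (intro sum.cong refl arg_cong[where f="measure ?C"]) auto
    finally show ?thesis .
  qed
  also have "\<dots> \<le> (\<Sum>r\<le>n. pmf q r * spread_bound d g (max s r))"
  proof (rule sum_mono)
    fix r
    show "measure ?C {\<omega> \<in> ?A. \<omega> u = r} \<le> pmf q r * spread_bound d g (max s r)"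
    proof (cases "1 \<le> max s r")
      case True
      let ?m = "max s r - 1"
      have "(1 - g ?m) ^ d = (\<Prod>c<d. 1 - g ?m)" by simp
      also have "\<dots> \<le> (\<Prod>c<d. 1 - carried_prob d q k (u @ [c]) ?m)"
      proof (rule prod_mono)
        fix c assume "c \<in> {..<d}"
        hence "u @ [c] \<in> tree_verts d" using u by (intro tree_verts_append) auto
        from IH[OF this, of ?m] g[of ?m]
        show "0 \<le> 1 - g ?m \<and> 1 - g ?m \<le> 1 - carried_prob d q k (u @ [c]) ?m" by linarith
      qed
      finally have children: "(1 - g ?m) ^ d \<le> (\<Prod>c<d. 1 - carried_prob d q k (u @ [c]) ?m)" .
      have "{\<omega> \<in> ?A. \<omega> u = r} = {\<omega> \<in> space ?C. \<omega> u = r \<and> carried_path d \<omega> (Suc k) u s}"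
        by auto
      hence "measure ?C {\<omega> \<in> ?A. \<omega> u = r}
          = pmf q r * (1 - (\<Prod>c<d. 1 - carried_prob d q k (u @ [c]) ?m))"
        using carried_prob_root_value[OF u True, of q k] by simp
      also have "\<dots> \<le> pmf q r * (1 - (1 - g ?m) ^ d)"
        using children by (intro mult_left_mono) auto
      finally show ?thesis using True by (simp add: spread_bound_def)
    next
      case False
      hence "{\<omega> \<in> ?A. \<omega> u = r} = {}" by auto
      thus ?thesis using False by (simp only: spread_bound_def) simp
    qed
  qed
  finally show ?thesis .
qed

text \<open>Iterating the one-step bound from the trivial bound \<open>1\<close>: \<open>carried_bound d q n k t\<close> bounds
  the probability of a carried path of length \<open>k\<close> with residual reach \<open>t\<close>.\<close>
fun carried_bound :: "nat \<Rightarrow> nat pmf \<Rightarrow> nat \<Rightarrow> nat \<Rightarrow> nat \<Rightarrow> real" where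
  "carried_bound d q n 0 t = 1"
| "carried_bound d q n (Suc k) t = (\<Sum>r\<le>n. pmf q r * spread_bound d (carried_bound d q n k) (max t r))"

lemma carried_bound_range: "0 \<le> carried_bound d q n k t \<and> carried_bound d q n k t \<le> 1"
proof (induction k arbitrary: t)
  case (Suc k)
  let ?f = "\<lambda>r. pmf q r * spread_bound d (carried_bound d q n k) (max t r)"
  have spread: "0 \<le> spread_bound d (carried_bound d q n k) m \<and> spread_bound d (carried_bound d q n k) m \<le> 1"
    for m by (rule spread_bound_range) (use Suc in auto)
  have "(\<Sum>r\<le>n. ?f r) \<le> (\<Sum>r\<le>n. pmf q r)"
    using spread by (intro sum_mono) (auto intro: mult_left_le)
  also have "\<dots> = measure_pmf.prob q {..n}" by (simp add: measure_measure_pmf_finite)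
  also have "\<dots> \<le> 1" by simp
  finally show ?case using spread by (auto intro: sum_nonneg)
qed simp

lemma carried_prob_le_bound:
  assumes "set_pmf q \<subseteq> {..n}"
  shows "v \<in> tree_verts d \<Longrightarrow> carried_prob d q k v t \<le> carried_bound d q n k t"
proof (induction k arbitrary: v t)
  case 0 thus ?case by (simp add: carried_prob_le_1)
next
  case (Suc k)
  show ?case
    unfolding carried_bound.simps by (rule carried_prob_Suc_le[OF Suc.prems assms Suc.IH carried_bound_range])
qed

text \<open>Reaching depth \<open>k + 1\<close> requires a carried path of length \<open>k\<close> from a neighbour of the
  origin with residual reach \<open>t = R\<^sub>O - 1 < n\<close>.\<close>
lemma reaches_depth_upper:
  assumes q: "set_pmf q \<subseteq> {..n}"
  shows "measure (cone_space d q) (reaches_depth d q (Suc k))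
       \<le> real (d + 1) * (\<Sum>t<n. carried_bound d q n k t)"
proof -
  let ?C = "cone_space d q" and ?I = "{..<n} \<times> {..<d+1}"
  interpret C: prob_space ?C by (rule prob_space_cone_space)
  have origin: "[] \<in> tree_verts d" by (simp add: tree_verts_def)
  have neighbour: "[c] \<in> tree_verts d" if "c < d + 1" for c using that by (simp add: tree_verts_def)
  define B where "B p = {\<omega> \<in> space ?C. carried_path d \<omega> k [snd p] (fst p)}" for p
  have sets_B: "B p \<in> sets ?C" if "p \<in> ?I" for p
    unfolding B_def using that by (intro sets_carried_path neighbour) auto
  have "{\<omega> \<in> reaches_depth d q (Suc k). \<omega> [] \<in> {..n}} \<subseteq> (\<Union>p\<in>?I. B p)"
  proof
    fix \<omega> assume \<omega>: "\<omega> \<in> {\<omega> \<in> reaches_depth d q (Suc k). \<omega> [] \<in> {..n}}"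
    then obtain v where "v \<in> cluster d \<omega>" "Suc k \<le> length v" by (auto simp: reaches_depth_def)
    from carried_path_from_origin[OF this] obtain c
      where "1 \<le> \<omega> []" "c < d + 1" "carried_path d \<omega> k [c] (\<omega> [] - 1)" by blast
    hence "(\<omega> [] - 1, c) \<in> ?I" "\<omega> \<in> B (\<omega> [] - 1, c)" using \<omega> by (auto simp: B_def reaches_depth_def)
    thus "\<omega> \<in> (\<Union>p\<in>?I. B p)" by blast
  qed
  hence "measure ?C {\<omega> \<in> reaches_depth d q (Suc k). \<omega> [] \<in> {..n}} \<le> measure ?C (\<Union>p\<in>?I. B p)"
    using sets_B by (intro C.finite_measure_mono) auto
  hence "measure ?C (reaches_depth d q (Suc k)) \<le> measure ?C (\<Union>p\<in>?I. B p)"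
    using measure_restrict_support[OF q origin sets_reaches_depth] by simp
  also have "\<dots> \<le> (\<Sum>p\<in>?I. measure ?C (B p))"
    by (rule C.finite_measure_subadditive_finite) (use sets_B in auto)
  also have "\<dots> \<le> (\<Sum>p\<in>?I. carried_bound d q n k (fst p))"
    using carried_prob_le_bound[OF q neighbour] by (intro sum_mono) (auto simp: B_def carried_prob_def)
  also have "\<dots> = (\<Sum>(t, c)\<in>?I. carried_bound d q n k t)" by (simp add: case_prod_beta)
  also have "\<dots> = (\<Sum>t<n. \<Sum>c<d+1. carried_bound d q n k t)" by (rule sum.cartesian_product[symmetric])
  also have "\<dots> = real (d + 1) * (\<Sum>t<n. carried_bound d q n k t)"
    by (simp add: sum_distrib_left)
  finally show ?thesis .
qed

lemma carried_bound_Suc_le: "carried_bound d q n (Suc k) t \<le> carried_bound d q n k t"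
proof (induction k arbitrary: t)
  case 0 thus ?case using carried_bound_range[of d q n "Suc 0" t] by simp
next
  case (Suc k)
  have "spread_bound d (carried_bound d q n (Suc k)) m \<le> spread_bound d (carried_bound d q n k) m" for m
    by (rule spread_bound_mono[OF Suc.IH]) (use carried_bound_range in blast)+
  hence "carried_bound d q n (Suc (Suc k)) t \<le> carried_bound d q n (Suc k) t"
    unfolding carried_bound.simps(2)[of d q n "Suc k"] carried_bound.simps(2)[of d q n k]
    by (intro sum_mono mult_left_mono) auto
  thus ?case .
qed

definition carried_limit :: "nat \<Rightarrow> nat pmf \<Rightarrow> nat \<Rightarrow> nat \<Rightarrow> real" where
  "carried_limit d q n t = lim (\<lambda>k. carried_bound d q n k t)"

lemma carried_bound_tendsto: "(\<lambda>k. carried_bound d q n k t) \<longlonglongrightarrow> carried_limit d q n t"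
proof -
  have "decseq (\<lambda>k. carried_bound d q n k t)" by (intro decseq_SucI carried_bound_Suc_le)
  then obtain L where "(\<lambda>k. carried_bound d q n k t) \<longlonglongrightarrow> L"
    using carried_bound_range by (metis decseq_convergent)
  thus ?thesis unfolding carried_limit_def by (metis limI)
qed

lemma carried_limit_range: "0 \<le> carried_limit d q n t \<and> carried_limit d q n t \<le> 1"
  using LIMSEQ_le_const[OF carried_bound_tendsto] LIMSEQ_le_const2[OF carried_bound_tendsto]
    carried_bound_range by metis

lemma carried_limit_fixed_point:
  "carried_limit d q n t = (\<Sum>r\<le>n. pmf q r * spread_bound d (carried_limit d q n) (max t r))"
proof (rule LIMSEQ_unique)
  show "(\<lambda>k. carried_bound d q n (Suc k) t) \<longlonglongrightarrow> carried_limit d q n t"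
    using carried_bound_tendsto LIMSEQ_Suc by blast
  have "(\<lambda>k. spread_bound d (carried_bound d q n k) m) \<longlonglongrightarrow> spread_bound d (carried_limit d q n) m" for m
    unfolding spread_bound_def by (auto intro!: tendsto_intros carried_bound_tendsto)
  thus "(\<lambda>k. carried_bound d q n (Suc k) t)
      \<longlonglongrightarrow> (\<Sum>r\<le>n. pmf q r * spread_bound d (carried_limit d q n) (max t r))"
    unfolding carried_bound.simps by (intro tendsto_intros)
qed

lemma one_minus_power_upper:
  fixes z :: real assumes "0 \<le> z" "z \<le> 1"
  shows "1 - (1 - z) ^ d \<le> real d * z"
  using Bernoulli_inequality[of "- z" d] assms by simp

lemma one_minus_power_upper_strict:
  fixes z :: real assumes "d \<ge> 2" "0 < z" "z \<le> 1"
  shows "1 - (1 - z) ^ d < real d * z"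
proof -
  obtain e where e: "d = Suc e" "e \<ge> 1" using assms(1) by (cases d) auto
  have "(1 - z) * (1 - real e * z) \<le> (1 - z) * (1 - z) ^ e"
    using one_minus_power_upper[of z e] assms by (intro mult_left_mono) auto
  moreover have "(1 - z) * (1 - real e * z) = 1 - real d * z + real e * z\<^sup>2"
    using e by (simp add: algebra_simps power2_eq_square)
  moreover have "0 < real e * z\<^sup>2" using e assms by simp
  ultimately show ?thesis using e by simp
qed

text \<open>The potential \<open>y(m) = 1 + D + \<dots> + D\<^sup>m\<^sup>-\<^sup>1\<close> with \<open>D = d\<close>; \<open>y(t + 1)\<close> is the scale on
  which residual reach \<open>t\<close> is measured.\<close>
definition potential :: "nat \<Rightarrow> nat \<Rightarrow> real" where
  "potential d m = (real d ^ m - 1) / (real d - 1)"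

lemma potential_pos: "d \<ge> 2 \<Longrightarrow> 1 \<le> m \<Longrightarrow> 0 < potential d m"
  using one_less_power[of "real d" m] by (simp add: potential_def)

lemma potential_superharmonic:
  assumes d: "d \<ge> 2" and total: "(\<Sum>r\<le>n. pmf q r) = 1"
    and subcritical: "real d * (\<Sum>r\<le>n. pmf q r * real d ^ r) \<le> 2 * real d - 1"
  shows "real d * (\<Sum>r\<le>n. pmf q r * potential d (max t r)) \<le> potential d (Suc t)"
proof -
  define D where "D = real d"
  have D: "D \<ge> 2" using d by (simp add: D_def)
  have "D \<le> D ^ Suc k" for k using D one_le_power[of D k] by (simp add: mult_left_mono[of 1 _ D])
  hence max_le: "D ^ Suc (max t r) \<le> D ^ Suc r + D ^ Suc t - D" for r
    by (cases "t \<le> r") (auto simp: max_def)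
  have expand: "(\<Sum>r\<le>n. pmf q r * (D ^ Suc r + D ^ Suc t - D))
      = D * (\<Sum>r\<le>n. pmf q r * D ^ r) + (D ^ Suc t - D)"
  proof -
    have "(\<Sum>r\<le>n. pmf q r * (D ^ Suc r + D ^ Suc t - D))
        = (\<Sum>r\<le>n. D * (pmf q r * D ^ r) + (D ^ Suc t - D) * pmf q r)"
      by (rule sum.cong) (simp_all add: algebra_simps)
    also have "\<dots> = D * (\<Sum>r\<le>n. pmf q r * D ^ r) + (D ^ Suc t - D) * (\<Sum>r\<le>n. pmf q r)"
      by (simp only: sum.distrib sum_distrib_left)
    finally show ?thesis using total by simp
  qed
  have "D * (\<Sum>r\<le>n. pmf q r * (D ^ max t r - 1)) = (\<Sum>r\<le>n. pmf q r * D ^ Suc (max t r)) - D"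
    using total by (simp add: sum_distrib_left sum_subtractf algebra_simps)
  also have "\<dots> \<le> (\<Sum>r\<le>n. pmf q r * (D ^ Suc r + D ^ Suc t - D)) - D"
    using max_le by (intro diff_right_mono sum_mono mult_left_mono) auto
  also have "\<dots> \<le> D ^ Suc t - 1" unfolding expand using subcritical by (simp add: D_def)
  finally have "D * (\<Sum>r\<le>n. pmf q r * (D ^ max t r - 1)) / (D - 1) \<le> (D ^ Suc t - 1) / (D - 1)"
    using D by (intro divide_right_mono) auto
  thus ?thesis
    by (simp add: potential_def D_def sum_divide_distrib[symmetric] times_divide_eq_right)
qed

lemma spread_bound_below_potential:
  assumes d: "d \<ge> 2" and c: "0 < c" and m: "1 \<le> m"
    and L: "\<And>t. 0 \<le> L t \<and> L t \<le> 1" and bound: "L (m - 1) \<le> c * potential d m"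
  shows "spread_bound d L m < real d * c * potential d m"
proof (cases "L (m - 1) = 0")
  case True
  thus ?thesis using m c d potential_pos[OF d m] by (simp add: spread_bound_def)
next
  case False
  hence "spread_bound d L m < real d * L (m - 1)"
    using m L[of "m - 1"] by (simp add: spread_bound_def one_minus_power_upper_strict[OF d])
  also have "\<dots> \<le> real d * c * potential d m"
    using mult_left_mono[OF bound, of "real d"] by (simp add: mult.assoc)
  finally show ?thesis .
qed

text \<open>Writing \<open>c\<close> for the largest ratio
  \<open>L t / y(t + 1)\<close>, superharmonicity of \<open>y\<close> and the strict Bernoulli bound force \<open>c \<le> 0\<close>.\<close>
lemma fixed_point_vanishes:
  fixes L :: "nat \<Rightarrow> real"
  assumes d: "d \<ge> 2" and q: "set_pmf q \<subseteq> {..n}" "pmf q n > 0"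
    and subcritical: "real d * (\<Sum>r\<le>n. pmf q r * real d ^ r) \<le> 2 * real d - 1"
    and fixp: "\<And>t. L t = (\<Sum>r\<le>n. pmf q r * spread_bound d L (max t r))"
    and L: "\<And>t. 0 \<le> L t \<and> L t \<le> 1"
    and t: "t < n"
  shows "L t = 0"
proof -
  let ?ratios = "(\<lambda>t. L t / potential d (Suc t)) ` {..<n}"
  define c where "c = Max ?ratios"
  have L_le: "L t \<le> c * potential d (Suc t)" if "t < n" for t
  proof -
    have "L t / potential d (Suc t) \<le> c" unfolding c_def using that by (intro Max_ge) auto
    thus ?thesis using potential_pos[OF d, of "Suc t"] by (simp add: field_simps)
  qed
  have "c \<le> 0"
  proof (rule ccontr)
    assume "\<not> c \<le> 0"
    hence c_pos: "0 < c" by simp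
    have "c \<in> ?ratios" unfolding c_def using t by (intro Max_in) auto
    then obtain t0 where "t0 < n" "c = L t0 / potential d (Suc t0)" by blast
    hence t0: "t0 < n" "L t0 = c * potential d (Suc t0)" using potential_pos[OF d, of "Suc t0"] by auto
    have term_le: "pmf q r * spread_bound d L (max t0 r) \<le> pmf q r * (real d * c * potential d (max t0 r))"
      if "r \<le> n" for r
    proof (cases "max t0 r = 0")
      case False
      have "L (max t0 r - 1) \<le> c * potential d (Suc (max t0 r - 1))"
        using that t0(1) by (intro L_le) auto
      hence "spread_bound d L (max t0 r) < real d * c * potential d (max t0 r)"
        using False by (intro spread_bound_below_potential[OF d c_pos _ L]) auto
      thus ?thesis by (intro mult_left_mono) auto
    qed (simp add: spread_bound_def potential_def)
    have "L (n - 1) \<le> c * potential d (Suc (n - 1))" using t by (intro L_le) auto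
    hence "spread_bound d L n < real d * c * potential d n"
      using t by (intro spread_bound_below_potential[OF d c_pos _ L]) auto
    hence "pmf q n * spread_bound d L (max t0 n) < pmf q n * (real d * c * potential d (max t0 n))"
      using q(2) t0(1) by (simp add: max_def)
    hence "L t0 < (\<Sum>r\<le>n. pmf q r * (real d * c * potential d (max t0 r)))"
      unfolding fixp[of t0] using term_le by (intro sum_strict_mono_ex1) auto
    also have "\<dots> = c * (real d * (\<Sum>r\<le>n. pmf q r * potential d (max t0 r)))"
      by (simp add: sum_distrib_left algebra_simps)
    also have "\<dots> \<le> c * potential d (Suc t0)"
      using potential_superharmonic[OF d sum_pmf_eq_1[OF _ q(1)] subcritical] c_pos
      by (intro mult_left_mono) auto
    finally show False using t0(2) by simp
  qed
  hence "c * potential d (Suc t) \<le> 0"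
    using potential_pos[OF d, of "Suc t"] by (intro mult_nonpos_nonneg) auto
  thus ?thesis using L_le[OF t] L[of t] by linarith
qed

theorem extinction:
  assumes d: "d \<ge> 2" and q: "set_pmf q \<subseteq> {..n}" "pmf q n > 0"
    and subcritical: "real d * (\<Sum>r\<le>n. pmf q r * real d ^ r) \<le> 2 * real d - 1"
  shows "measure (cone_space d q) (survival_event d q) = 0"
proof -
  have "carried_limit d q n t = 0" if "t < n" for t
    using fixed_point_vanishes[OF d q subcritical carried_limit_fixed_point carried_limit_range that] .
  moreover have "(\<lambda>k. real (d + 1) * (\<Sum>t<n. carried_bound d q n k t))
      \<longlonglongrightarrow> real (d + 1) * (\<Sum>t<n. carried_limit d q n t)"
    by (intro tendsto_intros carried_bound_tendsto)
  ultimately have bounds: "(\<lambda>k. real (d + 1) * (\<Sum>t<n. carried_bound d q n k t)) \<longlonglongrightarrow> 0"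
    by simp
  have "(\<lambda>k. measure (cone_space d q) (reaches_depth d q (Suc k)))
      \<longlonglongrightarrow> measure (cone_space d q) (survival_event d q)"
    using survival_event_limit LIMSEQ_Suc by blast
  hence "measure (cone_space d q) (survival_event d q) \<le> 0"
    by (rule LIMSEQ_le[OF _ bounds]) (use reaches_depth_upper[OF q(1)] in blast)
  thus ?thesis by (simp add: measure_le_0_iff)
qed

subsection \<open>Binomial radii\<close>


lemma binomial_pgf:
  fixes p x :: real assumes "0 \<le> p" "p \<le> 1"
  shows "(\<Sum>r\<le>n. pmf (binomial_pmf n p) r * x ^ r) = (p * x + 1 - p) ^ n"
proof -
  have "(p * x + 1 - p) ^ n = (\<Sum>k\<le>n. of_nat (n choose k) * (p * x) ^ k * (1 - p) ^ (n - k))"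
    using binomial_ring[of "p * x" "1 - p" n] by (simp add: add_diff_eq)
  also have "\<dots> = (\<Sum>r\<le>n. pmf (binomial_pmf n p) r * x ^ r)"
    using assms by (intro sum.cong refl) (simp add: power_mult_distrib algebra_simps)
  finally show ?thesis ..
qed

theorem mainTheorem9:
  fixes d n :: nat and p :: real
  assumes "d \<ge> 2" and "n \<ge> 1" and "0 < p" and "p < 1"
  shows "((p * real d + 1 - p) ^ n - (1 - p) ^ n > 1 \<longrightarrow>
           measure (cone_space d (binomial_pmf n p)) (survival_event d (binomial_pmf n p)) > 0)
       \<and> (2 * real d - real d * (p * real d + 1 - p) ^ n \<ge> 1 \<longrightarrow>
           measure (cone_space d (binomial_pmf n p)) (survival_event d (binomial_pmf n p)) = 0)"
proof -
  let ?q = "binomial_pmf n p"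
  have pgf: "(\<Sum>r\<le>n. pmf ?q r * real d ^ r) = (p * real d + 1 - p) ^ n"
    using binomial_pgf assms(3,4) by simp
  text \<open>The terms \<open>r \<ge> 1\<close> of the generating function give the mean of the jump process.\<close>
  have "{..n} = insert 0 {1..n}" by auto
  hence "(\<Sum>r\<in>{1..n}. pmf ?q r * real d ^ r) = (p * real d + 1 - p) ^ n - (1 - p) ^ n"
    using pgf assms(3,4) by simp
  moreover have "set_pmf ?q \<subseteq> {..n}" "pmf ?q n > 0" using assms(3,4) by auto
  ultimately show ?thesis
    using survival_positive[where q="?q" and n=n and d=d] extinction[OF assms(1), where q="?q" and n=n] pgf by auto
qed

end
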